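(* Let $E$ be a finite set and $V \subset \mathbb R^E$ a linear subspace with oriented matroid $M$. Define an equivalence relation on the set of all triples $(F,G,T)$, where $T$ is a tope of $M$ and $F \subset G$ are flats relatively acyclic in $T$, by $(F,G,T) \sim (F',G',T')$ if and only if $(F,G) = (F',G')$ and $\pi_{G \setminus F}(T) = \pi_{G \setminus F}(T')$. Then for two such triples, ${}_T\mathcal Y_{FG}^\circ \cap {}_{T'}\mathcal Y_{F'G'}^\circ$ is empty unless $(F,G,T) \sim (F',G',T')$, in which case ${}_T\mathcal Y_{FG}^\circ = {}_{T'}\mathcal Y_{F'G'}^\circ$.
   Context: $\mathbb P^1_{\mathbb R}=\mathbb R\cup\{\infty\}$ with analytic topology. The sign map $s:\mathbb R^E\to\{-,0,+\}^E$ records signs of coordinates; the covectors of $M$ are $\{s(v):v\in V\}$; for a signed set $X$, $X^-,X^0,X^+$ are the coordinates with value $-,0,+$; $X\le Y$ means $X^+\subset Y^+$, $X^-\subset Y^-$; topes are maximal covectors; flats are the sets $X^0$. A flat is relatively acyclic in a tope $T$ if it equals $X^0$ for a covector $X\le T$. $\pi_A$ denotes restriction of a signed set (or vector) to the coordinates in $A$. ${}_T\mathcal Y_V$ is the closure of $s^{-1}(T)\cap V$ in $(\mathbb P^1_{\mathbb R})^E$, and ${}_T\mathcal Y_{FG}^\circ := {}_T\mathcal Y_V \cap (0^F\times\mathbb R_{>0}^{(G\setminus F)\cap T^+}\times\mathbb R_{<0}^{(G\setminus F)\cap T^-}\times\infty^{E\setminus G})$, i.e. points of ${}_T\mathcal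 Y_V$ with coordinates $0$ on $F$, positive on $(G\setminus F)\cap T^+$, negative on $(G\setminus F)\cap T^-$, and $\infty$ on $E\setminus G$. *)

theory Defs
  imports "HOL-Analysis.Analysis"
begin

definition lin_subspace :: "('e \<Rightarrow> real) set \<Rightarrow> bool" where
  "lin_subspace V \<longleftrightarrow> (\<lambda>e. 0) \<in> V \<and>
     (\<forall>v\<in>V. \<forall>w\<in>V. (\<lambda>e. v e + w e) \<in> V) \<and>
     (\<forall>c. \<forall>v\<in>V. (\<lambda>e. c * v e) \<in> V)"

datatype sign = Neg | Zero | Pos

definition sgn_of :: "real \<Rightarrow> sign" where
  "sgn_of x = (if x < 0 then Neg else if x = 0 then Zero else Pos)"

definition sign_map :: "('e \<Rightarrow> real) \<Rightarrow> ('e \<Rightarrow> sign)" where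
  "sign_map v = (\<lambda>e. sgn_of (v e))"

definition covectors :: "('e \<Rightarrow> real) set \<Rightarrow> ('e \<Rightarrow> sign) set" where
  "covectors V = sign_map ` V"

definition pos_part :: "('e \<Rightarrow> sign) \<Rightarrow> 'e set" where "pos_part X = {e. X e = Pos}"
definition neg_part :: "('e \<Rightarrow> sign) \<Rightarrow> 'e set" where "neg_part X = {e. X e = Neg}"
definition zero_part :: "('e \<Rightarrow> sign) \<Rightarrow> 'e set" where "zero_part X = {e. X e = Zero}"

definition sign_le :: "('e \<Rightarrow> sign) \<Rightarrow> ('e \<Rightarrow> sign) \<Rightarrow> bool" where
  "sign_le X Y \<longleftrightarrow> pos_part X \<subseteq> pos_part Y \<and> neg_part X \<subseteq> neg_part Y"

definition is_tope :: "('e \<Rightarrow> real) set \<Rightarrow> ('e \<Rightarrow> sign) \<Rightarrow> bool" where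
  "is_tope V T \<longleftrightarrow> T \<in> covectors V \<and>
     (\<forall>Y\<in>covectors V. sign_le T Y \<longrightarrow> Y = T)"

definition is_flat :: "('e \<Rightarrow> real) set \<Rightarrow> 'e set \<Rightarrow> bool" where
  "is_flat V F \<longleftrightarrow> (\<exists>X\<in>covectors V. F = zero_part X)"

definition rel_acyclic :: "('e \<Rightarrow> real) set \<Rightarrow> ('e \<Rightarrow> sign) \<Rightarrow> 'e set \<Rightarrow> bool" where
  "rel_acyclic V T F \<longleftrightarrow> (\<exists>X\<in>covectors V. sign_le X T \<and> F = zero_part X)"

text \<open>P^1_R = R \<union> {\<infinity>} as real option (None = \<infinity>), with the analytic topology
  (one-point compactification of R).\<close>
definition P1_open :: "real option set \<Rightarrow> bool" where
  "P1_open U \<longleftrightarrow> open (Some -` U) \<and>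
     (None \<in> U \<longrightarrow> (\<exists>r. \<forall>x. r < \<bar>x\<bar> \<longrightarrow> Some x \<in> U))"

lemma istopology_P1: "istopology P1_open"
  unfolding istopology_def
proof (intro conjI allI impI)
  fix S T assume S: "P1_open S" and T: "P1_open T"
  show "P1_open (S \<inter> T)"
    unfolding P1_open_def
  proof (intro conjI impI)
    show "open (Some -` (S \<inter> T))" using S T unfolding P1_open_def
      by (simp add: vimage_Int open_Int)
  next
    assume "None \<in> S \<inter> T"
    then obtain r s where "\<forall>x. r < \<bar>x\<bar> \<longrightarrow> Some x \<in> S" "\<forall>x. s < \<bar>x\<bar> \<longrightarrow> Some x \<in> T"
      using S T unfolding P1_open_def by auto
    then show "\<exists>r. \<forall>x. r < \<bar>x\<bar> \<longrightarrow> Some x \<in> S \<inter> T"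
      by (intro exI[of _ "max r s"]) auto
  qed
next
  fix K assume K: "\<forall>S\<in>K. P1_open S"
  show "P1_open (\<Union>K)"
    unfolding P1_open_def
  proof (intro conjI impI)
    have "Some -` (\<Union>K) = (\<Union>S\<in>K. Some -` S)" by auto
    then show "open (Some -` (\<Union>K))" using K unfolding P1_open_def by auto
  next
    assume "None \<in> \<Union>K"
    then obtain S where "S \<in> K" "None \<in> S" by auto
    then obtain r where "\<forall>x. r < \<bar>x\<bar> \<longrightarrow> Some x \<in> S"
      using K unfolding P1_open_def by auto
    then show "\<exists>r. \<forall>x. r < \<bar>x\<bar> \<longrightarrow> Some x \<in> \<Union>K"
      using \<open>S \<in> K\<close> by blast
  qed
qed

definition P1_topology :: "real option topology" where
  "P1_topology = topology P1_open"

definition P1E_topology :: "('e \<Rightarrow> real option) topology" where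
  "P1E_topology = product_topology (\<lambda>_. P1_topology) UNIV"

definition Y_V :: "('e \<Rightarrow> real) set \<Rightarrow> ('e \<Rightarrow> sign) \<Rightarrow> ('e \<Rightarrow> real option) set" where
  "Y_V V T = P1E_topology closure_of ((\<lambda>v e. Some (v e)) ` {v\<in>V. sign_map v = T})"

definition Y_open_stratum ::
  "('e \<Rightarrow> real) set \<Rightarrow> ('e \<Rightarrow> sign) \<Rightarrow> 'e set \<Rightarrow> 'e set \<Rightarrow> ('e \<Rightarrow> real option) set" where
  "Y_open_stratum V T F G = Y_V V T \<inter>
     {y. (\<forall>e\<in>F. y e = Some 0) \<and>
         (\<forall>e\<in>(G - F) \<inter> pos_part T. \<exists>r>0. y e = Some r) \<and>
         (\<forall>e\<in>(G - F) \<inter> neg_part T. \<exists>r<0. y e = Some r) \<and>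
         (\<forall>e\<in>- G. y e = None)}"

definition triple_equiv ::
  "'e set \<times> 'e set \<times> ('e \<Rightarrow> sign) \<Rightarrow> 'e set \<times> 'e set \<times> ('e \<Rightarrow> sign) \<Rightarrow> bool" where
  "triple_equiv t t' = (case t of (F, G, T) \<Rightarrow> case t' of (F', G', T') \<Rightarrow>
     F = F' \<and> G = G' \<and> (\<forall>e\<in>G - F. T e = T' e))"

definition admissible_triple :: "('e \<Rightarrow> real) set \<Rightarrow> 'e set \<times> 'e set \<times> ('e \<Rightarrow> sign) \<Rightarrow> bool" where
  "admissible_triple V t = (case t of (F, G, T) \<Rightarrow>
     is_tope V T \<and> F \<subseteq> G \<and> is_flat V F \<and> is_flat V G \<and>
     rel_acyclic V T F \<and> rel_acyclic V T G)"

end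

theory Submission
  imports Defs
begin

(* A point of an open stratum determines its stratum's sign pattern: it is \<infinity> off G, 0 on F and
   has the sign of T on G - F, where T does not vanish because F is relatively acyclic in T.
   Hence strata that meet are equivalent.
   Conversely, let y lie in the stratum of (F, G, T) and let T' agree with T on G - F. As y is
   finite on G and the image of V in R^G is closed, y agrees on G with some q in V, and q is
   conformal to T' on G. Adding to q a small multiple of a vector of sign T' and a large
   multiple of a vector vanishing exactly on G with sign T' elsewhere (it exists because G is
   relatively acyclic in T') gives vectors of V of sign T' arbitrarily close to y in (P^1)^E,
   so y also lies in the stratum of (F, G, T'). *)

lemma sgn_of_add_small: "\<bar>d\<bar> < \<bar>a\<bar> \<Longrightarrow> sgn_of (a + d) = sgn_of a"
  unfolding sgn_of_def by (auto split: if_splits simp: abs_if)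

lemma sgn_of_scale: "0 < c \<Longrightarrow> sgn_of (c * x) = sgn_of x"
  unfolding sgn_of_def by (auto simp: mult_less_0_iff)

lemma sgn_of_eq_Zero_iff [simp]: "sgn_of x = Zero \<longleftrightarrow> x = 0"
  unfolding sgn_of_def by auto

lemma eventually_small_multiple:
  fixes a c :: real
  assumes "0 < c"
  shows "\<forall>\<^sub>F \<epsilon> in at_right 0. \<bar>\<epsilon> * a\<bar> < c"
proof -
  have "((\<lambda>\<epsilon>. \<bar>\<epsilon> * a\<bar>) \<longlongrightarrow> 0) (at_right 0)"
    by (intro tendsto_rabs_zero tendsto_mult_left_zero tendsto_ident_at)
  then show ?thesis
    using assms by (rule order_tendstoD)
qed

lemma eventually_dominant_multiple:
  fixes a b R :: real
  assumes "b \<noteq> 0"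
  shows "\<forall>\<^sub>F s in at_top. R < \<bar>a + s * b\<bar> \<and> sgn_of (a + s * b) = sgn_of b"
  using eventually_gt_at_top[of "(\<bar>a\<bar> + \<bar>R\<bar>) / \<bar>b\<bar>"]
proof eventually_elim
  case (elim s)
  have "0 \<le> (\<bar>a\<bar> + \<bar>R\<bar>) / \<bar>b\<bar>"
    by simp
  with elim have "0 < s"
    by linarith
  with elim have big: "\<bar>a\<bar> + \<bar>R\<bar> < \<bar>s * b\<bar>"
    using assms by (simp add: field_simps abs_mult)
  have "\<bar>s * b\<bar> \<le> \<bar>a + s * b\<bar> + \<bar>a\<bar>"
    using abs_triangle_ineq4[of "a + s * b" a] by simp
  then have "R < \<bar>a + s * b\<bar>"
    using big by linarith
  moreover have "sgn_of (s * b + a) = sgn_of (s * b)"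
    by (rule sgn_of_add_small) (use big in linarith)
  ultimately show ?case
    using sgn_of_scale[OF \<open>0 < s\<close>, of b] by (simp add: add.commute)
qed

lemma openin_P1_topology: "openin P1_topology = P1_open"
  unfolding P1_topology_def using istopology_P1 by simp

lemma P1_open_UNIV: "P1_open UNIV"
  unfolding P1_open_def by auto

lemma topspace_P1E_topology: "topspace P1E_topology = UNIV"
proof -
  have "topspace P1_topology = UNIV"
    unfolding topspace_def openin_P1_topology using P1_open_UNIV by auto
  then show ?thesis
    unfolding P1E_topology_def topspace_product_topology by auto
qed

lemma P1_open_Some_image: "open B \<Longrightarrow> P1_open (Some ` B)"
  unfolding P1_open_def by (simp add: inj_vimage_image_eq)

lemma P1_open_eventually_finite:
  assumes "P1_open W" "Some r \<in> W"
  shows "\<forall>\<^sub>F \<rho> in at_right 0. \<forall>x. \<bar>x - r\<bar> < \<rho> \<longrightarrow> Some x \<in> W"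
proof -
  have "open (Some -` W)" "r \<in> Some -` W"
    using assms unfolding P1_open_def by auto
  then obtain \<delta> where "0 < \<delta>" "ball r \<delta> \<subseteq> Some -` W"
    by (meson openE)
  then have "\<forall>x. \<bar>x - r\<bar> < \<rho> \<longrightarrow> Some x \<in> W" if "\<rho> < \<delta>" for \<rho>
  proof (intro allI impI)
    fix x assume "\<bar>x - r\<bar> < \<rho>"
    then have "x \<in> ball r \<delta>"
      using that by (simp add: dist_real_def abs_minus_commute)
    then show "Some x \<in> W"
      using \<open>ball r \<delta> \<subseteq> Some -` W\<close> by blast
  qed
  then show ?thesis
    unfolding eventually_at_right_field using \<open>0 < \<delta>\<close> by blast
qed

lemma P1_open_eventually_infinite:
  assumes "P1_open W" "None \<in> W"
  shows "\<forall>\<^sub>F R in at_top. \<forall>x. R < \<bar>x\<bar> \<longrightarrow> Some x \<in> W"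
proof -
  obtain R\<^sub>0 where R\<^sub>0: "\<forall>x. R\<^sub>0 < \<bar>x\<bar> \<longrightarrow> Some x \<in> W"
    using assms unfolding P1_open_def by blast
  show ?thesis
    by (rule eventually_mono[OF eventually_ge_at_top[of R\<^sub>0]]) (use R\<^sub>0 in auto)
qed

lemma P1E_open_neighbourhood:
  fixes y :: "'e::finite \<Rightarrow> real option"
  assumes "openin P1E_topology U" "y \<in> U"
  obtains \<rho> R where "0 < \<rho>"
    "\<And>z. (\<And>e r. y e = Some r \<Longrightarrow> \<bar>z e - r\<bar> < \<rho>) \<Longrightarrow> (\<And>e. y e = None \<Longrightarrow> R < \<bar>z e\<bar>)
       \<Longrightarrow> (\<lambda>e. Some (z e)) \<in> U"
proof -
  have "\<exists>W. (\<forall>e\<in>UNIV. openin P1_topology (W e)) \<and> y \<in> Pi\<^sub>E UNIV W \<and> Pi\<^sub>E UNIV W \<subseteq> U"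
    using assms unfolding P1E_topology_def openin_product_topology_alt by blast
  then obtain W where W: "\<And>e. P1_open (W e)" "\<And>e. y e \<in> W e" "Pi\<^sub>E UNIV W \<subseteq> U"
    unfolding openin_P1_topology by (auto simp: PiE_iff)
  have "\<forall>\<^sub>F \<rho> in at_right 0. \<forall>x. y e \<noteq> None \<longrightarrow> \<bar>x - the (y e)\<bar> < \<rho> \<longrightarrow> Some x \<in> W e" for e
    using P1_open_eventually_finite[of "W e"] W(1)[of e] W(2)[of e] by (cases "y e") auto
  then have "\<forall>\<^sub>F \<rho> in at_right 0. \<forall>e x. y e \<noteq> None \<longrightarrow> \<bar>x - the (y e)\<bar> < \<rho> \<longrightarrow> Some x \<in> W e"
    by (rule eventually_all_finite)
  with eventually_at_right_less have "\<forall>\<^sub>F \<rho> in at_right 0. 0 < \<rho> \<and>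
      (\<forall>e x. y e \<noteq> None \<longrightarrow> \<bar>x - the (y e)\<bar> < \<rho> \<longrightarrow> Some x \<in> W e)"
    by (rule eventually_conj)
  then obtain \<rho> where \<rho>: "0 < \<rho>" "\<And>e x. y e \<noteq> None \<Longrightarrow> \<bar>x - the (y e)\<bar> < \<rho> \<Longrightarrow> Some x \<in> W e"
    using eventually_happens'[OF trivial_limit_at_right_real] by blast
  have "\<forall>\<^sub>F R in at_top. \<forall>x. y e = None \<longrightarrow> R < \<bar>x\<bar> \<longrightarrow> Some x \<in> W e" for e
    using P1_open_eventually_infinite[of "W e"] W(1)[of e] W(2)[of e] by (cases "y e") auto
  then have "\<forall>\<^sub>F R in at_top. \<forall>e x. y e = None \<longrightarrow> R < \<bar>x\<bar> \<longrightarrow> Some x \<in> W e"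
    by (rule eventually_all_finite)
  then obtain R where R: "\<And>e x. y e = None \<Longrightarrow> R < \<bar>x\<bar> \<Longrightarrow> Some x \<in> W e"
    using eventually_happens'[OF trivial_limit_at_top_linorder] by blast
  show ?thesis
  proof (rule that[OF \<open>0 < \<rho>\<close>])
    fix z assume "\<And>e r. y e = Some r \<Longrightarrow> \<bar>z e - r\<bar> < \<rho>" "\<And>e. y e = None \<Longrightarrow> R < \<bar>z e\<bar>"
    then have "Some (z e) \<in> W e" for e
      using \<rho>(2) R by (cases "y e") auto
    then show "(\<lambda>e. Some (z e)) \<in> U"
      using W(3) by (auto simp: PiE_iff)
  qed
qed

lemma lin_subspace_add_scaled:
  assumes "lin_subspace V" "u \<in> V" "v \<in> V"
  shows "(\<lambda>e. u e + c * v e) \<in> V"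
proof -
  have add: "\<And>v w. v \<in> V \<Longrightarrow> w \<in> V \<Longrightarrow> (\<lambda>e. v e + w e) \<in> V"
    and scale: "\<And>v. v \<in> V \<Longrightarrow> (\<lambda>e. c * v e) \<in> V"
    using assms(1) unfolding lin_subspace_def by blast+
  show ?thesis
    using add[OF assms(2) scale[OF assms(3)]] by simp
qed

lemma rel_acyclic_witness:
  assumes "rel_acyclic V T F"
  obtains x where "x \<in> V" "\<And>e. x e = 0 \<longleftrightarrow> e \<in> F" "\<And>e. e \<notin> F \<Longrightarrow> sgn_of (x e) = T e"
proof -
  obtain x where x: "x \<in> V" "sign_le (sign_map x) T" "F = zero_part (sign_map x)"
    using assms unfolding rel_acyclic_def covectors_def by auto
  have "x e = 0 \<longleftrightarrow> e \<in> F" for e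
    using x(3) by (simp add: zero_part_def sign_map_def)
  moreover have "sgn_of (x e) = T e" if "e \<notin> F" for e
    using x(2) that \<open>x e = 0 \<longleftrightarrow> e \<in> F\<close>
    unfolding sign_le_def pos_part_def neg_part_def sign_map_def sgn_of_def
    by (auto split: if_splits)
  ultimately show ?thesis
    using that x(1) by blast
qed

lemma rel_acyclic_nonzero:
  assumes "rel_acyclic V T F" "e \<notin> F"
  shows "T e \<noteq> Zero"
  using assms by (metis rel_acyclic_witness sgn_of_eq_Zero_iff)

lemma small_perturbation_with_sign:
  fixes V :: "('e::finite \<Rightarrow> real) set"
  assumes lin: "lin_subspace V" and T: "T \<in> covectors V"
    and q: "q \<in> V" and conf: "\<And>e. e \<in> G \<Longrightarrow> q e \<noteq> 0 \<Longrightarrow> sgn_of (q e) = T e"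
    and "0 < \<rho>"
  obtains u where "u \<in> V" "\<And>e. e \<in> G \<Longrightarrow> sgn_of (u e) = T e" "\<And>e. \<bar>u e - q e\<bar> < \<rho>"
proof -
  obtain t where t: "t \<in> V" "\<And>e. sgn_of (t e) = T e"
    using T unfolding covectors_def sign_map_def by (auto simp: fun_eq_iff)
  have "\<forall>\<^sub>F \<epsilon> in at_right 0. 0 < \<epsilon> \<and> \<bar>\<epsilon> * t e\<bar> < \<rho> \<and> (q e \<noteq> 0 \<longrightarrow> \<bar>\<epsilon> * t e\<bar> < \<bar>q e\<bar>)" for e
  proof (cases "q e = 0")
    case True
    then show ?thesis
      using eventually_conj[OF eventually_at_right_less eventually_small_multiple[OF \<open>0 < \<rho>\<close>]]
      by simp
  next
    case False
    then show ?thesis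
      using eventually_conj[OF eventually_at_right_less eventually_conj[OF
          eventually_small_multiple[OF \<open>0 < \<rho>\<close>] eventually_small_multiple[of "\<bar>q e\<bar>"]]]
      by simp
  qed
  then have "\<forall>\<^sub>F \<epsilon> in at_right 0. \<forall>e. 0 < \<epsilon> \<and> \<bar>\<epsilon> * t e\<bar> < \<rho> \<and> (q e \<noteq> 0 \<longrightarrow> \<bar>\<epsilon> * t e\<bar> < \<bar>q e\<bar>)"
    by (rule eventually_all_finite)
  then obtain \<epsilon> where \<epsilon>: "0 < \<epsilon>" "\<And>e. \<bar>\<epsilon> * t e\<bar> < \<rho>" "\<And>e. q e \<noteq> 0 \<Longrightarrow> \<bar>\<epsilon> * t e\<bar> < \<bar>q e\<bar>"
    using eventually_happens'[OF trivial_limit_at_right_real] by blast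
  show ?thesis
  proof (rule that)
    show "(\<lambda>e. q e + \<epsilon> * t e) \<in> V"
      using lin q t(1) by (rule lin_subspace_add_scaled)
    show "sgn_of (q e + \<epsilon> * t e) = T e" if "e \<in> G" for e
    proof (cases "q e = 0")
      case True
      then show ?thesis
        using sgn_of_scale[OF \<epsilon>(1)] t(2) by simp
    next
      case False
      then show ?thesis
        using sgn_of_add_small[OF \<epsilon>(3)] conf[OF that] by simp
    qed
    show "\<bar>q e + \<epsilon> * t e - q e\<bar> < \<rho>" for e
      using \<epsilon>(2)[of e] by simp
  qed
qed

lemma large_extension_with_sign:
  fixes V :: "('e::finite \<Rightarrow> real) set"
  assumes lin: "lin_subspace V" and G: "rel_acyclic V T G"
    and u: "u \<in> V" and u_sign: "\<And>e. e \<in> G \<Longrightarrow> sgn_of (u e) = T e"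
  obtains w where "w \<in> V" "sign_map w = T" "\<And>e. e \<in> G \<Longrightarrow> w e = u e" "\<And>e. e \<notin> G \<Longrightarrow> R < \<bar>w e\<bar>"
proof -
  obtain g where g: "g \<in> V" "\<And>e. g e = 0 \<longleftrightarrow> e \<in> G" "\<And>e. e \<notin> G \<Longrightarrow> sgn_of (g e) = T e"
    using rel_acyclic_witness[OF G] by blast
  have "\<forall>\<^sub>F s in at_top. e \<notin> G \<longrightarrow> R < \<bar>u e + s * g e\<bar> \<and> sgn_of (u e + s * g e) = sgn_of (g e)" for e
    using eventually_dominant_multiple[of "g e" R "u e"] g(2)[of e] by (cases "e \<in> G") auto
  then have "\<forall>\<^sub>F s in at_top. \<forall>e. e \<notin> G \<longrightarrow> R < \<bar>u e + s * g e\<bar> \<and> sgn_of (u e + s * g e) = sgn_of (g e)"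
    by (rule eventually_all_finite)
  then obtain s where s: "\<And>e. e \<notin> G \<Longrightarrow> R < \<bar>u e + s * g e\<bar> \<and> sgn_of (u e + s * g e) = sgn_of (g e)"
    using eventually_happens'[OF trivial_limit_at_top_linorder] by blast
  show ?thesis
  proof (rule that)
    show "(\<lambda>e. u e + s * g e) \<in> V"
      using lin u g(1) by (rule lin_subspace_add_scaled)
    show "sign_map (\<lambda>e. u e + s * g e) = T"
    proof
      fix e
      show "sign_map (\<lambda>e. u e + s * g e) e = T e"
        using u_sign[of e] s[of e] g(2,3)[of e] by (cases "e \<in> G") (simp_all add: sign_map_def)
    qed
    show "u e + s * g e = u e" if "e \<in> G" for e
      using g(2)[of e] that by simp
    show "R < \<bar>u e + s * g e\<bar>" if "e \<notin> G" for e
      using s[OF that] by simp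
  qed
qed

lemma conformal_point_in_Y_V:
  fixes V :: "('e::finite \<Rightarrow> real) set"
  assumes "lin_subspace V" "T \<in> covectors V" "rel_acyclic V T G"
    and "q \<in> V" "\<And>e. e \<in> G \<Longrightarrow> q e \<noteq> 0 \<Longrightarrow> sgn_of (q e) = T e"
  shows "(\<lambda>e. if e \<in> G then Some (q e) else None) \<in> Y_V V T"
proof -
  let ?y = "\<lambda>e. if e \<in> G then Some (q e) else None"
  have "\<exists>z\<in>(\<lambda>v e. Some (v e)) ` {v \<in> V. sign_map v = T}. z \<in> U"
    if U: "openin P1E_topology U" "?y \<in> U" for U
  proof -
    obtain \<rho> R where "0 < \<rho>" and nbhd: "\<And>z. (\<And>e r. ?y e = Some r \<Longrightarrow> \<bar>z e - r\<bar> < \<rho>)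
        \<Longrightarrow> (\<And>e. ?y e = None \<Longrightarrow> R < \<bar>z e\<bar>) \<Longrightarrow> (\<lambda>e. Some (z e)) \<in> U"
      using P1E_open_neighbourhood[OF U] by blast
    obtain u where u: "u \<in> V" "\<And>e. e \<in> G \<Longrightarrow> sgn_of (u e) = T e" "\<And>e. \<bar>u e - q e\<bar> < \<rho>"
      using small_perturbation_with_sign[OF assms(1,2,4,5) \<open>0 < \<rho>\<close>] by blast
    obtain w where w: "w \<in> V" "sign_map w = T"
      "\<And>e. e \<in> G \<Longrightarrow> w e = u e" "\<And>e. e \<notin> G \<Longrightarrow> R < \<bar>w e\<bar>"
      using large_extension_with_sign[OF assms(1,3) u(1,2)] by blast
    have "(\<lambda>e. Some (w e)) \<in> U"
      by (rule nbhd) (use u(3) w(3,4) in \<open>auto split: if_splits\<close>)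
    then show ?thesis
      using w(1,2) by blast
  qed
  then show ?thesis
    unfolding Y_V_def in_closure_of topspace_P1E_topology by blast
qed


(* R^G, realised inside real^'e by padding with zeros, where closed_subspace is available. *)
definition restrict_vec :: "'e set \<Rightarrow> ('e::finite \<Rightarrow> real) \<Rightarrow> real^'e" where
  "restrict_vec G v = (\<chi> e. if e \<in> G then v e else 0)"

lemma subspace_restrict_vec_image:
  assumes "lin_subspace V"
  shows "subspace (restrict_vec G ` V)"
  unfolding subspace_def
proof (intro conjI ballI allI)
  show "0 \<in> restrict_vec G ` V"
    using assms unfolding lin_subspace_def
    by (intro image_eqI[of _ _ "\<lambda>e. 0"]) (auto simp: restrict_vec_def vec_eq_iff)
next
  fix x y assume "x \<in> restrict_vec G ` V" "y \<in> restrict_vec G ` V"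
  then obtain u v where "u \<in> V" "v \<in> V" "x = restrict_vec G u" "y = restrict_vec G v"
    by blast
  then show "x + y \<in> restrict_vec G ` V"
    using assms unfolding lin_subspace_def
    by (intro image_eqI[of _ _ "\<lambda>e. u e + v e"]) (auto simp: restrict_vec_def vec_eq_iff)
next
  fix c :: real and x assume "x \<in> restrict_vec G ` V"
  then obtain u where "u \<in> V" "x = restrict_vec G u"
    by blast
  then show "c *\<^sub>R x \<in> restrict_vec G ` V"
    using assms unfolding lin_subspace_def
    by (intro image_eqI[of _ _ "\<lambda>e. c * u e"]) (auto simp: restrict_vec_def vec_eq_iff)
qed

lemma restrict_vec_in_closure:
  fixes S :: "('e::finite \<Rightarrow> real) set"
  assumes y: "y \<in> P1E_topology closure_of ((\<lambda>v e. Some (v e)) ` S)"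
    and fin: "\<And>e. e \<in> G \<Longrightarrow> y e \<noteq> None"
  shows "restrict_vec G (\<lambda>e. the (y e)) \<in> closure (restrict_vec G ` S)"
  unfolding closure_approachable
proof (intro allI impI)
  define p where "p = restrict_vec G (\<lambda>e. the (y e))"
  fix \<delta> :: real assume "0 < \<delta>"
  define d where "d = \<delta> / real CARD('e)"
  have "0 < d"
    using \<open>0 < \<delta>\<close> by (simp add: d_def)
  define U where "U = (\<Pi>\<^sub>E e\<in>UNIV. if e \<in> G then Some ` ball (p $ e) d else UNIV)"
  have "openin P1E_topology U"
    unfolding U_def P1E_topology_def
    by (rule product_topology_basis) (simp_all add: openin_P1_topology P1_open_Some_image P1_open_UNIV)
  moreover have "y e \<in> (if e \<in> G then Some ` ball (p $ e) d else UNIV)" for e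
  proof (cases "e \<in> G")
    case True
    then have "y e = Some (p $ e)"
      using fin[OF True] by (auto simp: p_def restrict_vec_def)
    with True \<open>0 < d\<close> show ?thesis
      by simp
  qed simp
  then have "y \<in> U"
    by (simp add: U_def PiE_iff)
  ultimately obtain v where v: "v \<in> S" "(\<lambda>e. Some (v e)) \<in> U"
    using y unfolding in_closure_of by blast
  have coord: "\<bar>(restrict_vec G v - p) $ e\<bar> < d" for e
  proof (cases "e \<in> G")
    case True
    have "Some (v e) \<in> (if e \<in> G then Some ` ball (p $ e) d else UNIV)"
      using v(2) unfolding U_def PiE_iff by blast
    with True have "v e \<in> ball (p $ e) d"
      by auto
    with True show ?thesis
      by (simp add: restrict_vec_def dist_real_def abs_minus_commute)
  next
    case False
    with \<open>0 < d\<close> show ?thesis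
      by (simp add: restrict_vec_def p_def)
  qed
  have "(\<Sum>e\<in>UNIV. \<bar>(restrict_vec G v - p) $ e\<bar>) < (\<Sum>e\<in>(UNIV :: 'e set). d)"
    by (rule sum_strict_mono) (simp_all add: coord[simplified])
  moreover have "dist (restrict_vec G v) p \<le> (\<Sum>e\<in>UNIV. \<bar>(restrict_vec G v - p) $ e\<bar>)"
    unfolding dist_norm by (rule norm_le_l1_cart)
  ultimately have "dist (restrict_vec G v) p < \<delta>"
    by (simp add: d_def)
  with v(1) show "\<exists>x\<in>restrict_vec G ` S. dist x (restrict_vec G (\<lambda>e. the (y e))) < \<delta>"
    unfolding p_def by blast
qed

lemma closure_of_embedded_subspace:
  fixes V :: "('e::finite \<Rightarrow> real) set"
  assumes lin: "lin_subspace V"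
    and y: "y \<in> P1E_topology closure_of ((\<lambda>v e. Some (v e)) ` V)"
    and fin: "\<And>e. e \<in> G \<Longrightarrow> y e \<noteq> None"
  obtains q where "q \<in> V" "\<And>e. e \<in> G \<Longrightarrow> y e = Some (q e)"
proof -
  define p where "p = restrict_vec G (\<lambda>e. the (y e))"
  have "closed (restrict_vec G ` V)"
    using lin by (intro closed_subspace subspace_restrict_vec_image)
  then have "p \<in> restrict_vec G ` V"
    using restrict_vec_in_closure[OF y fin] closure_closed unfolding p_def by metis
  then obtain q where "q \<in> V" "p = restrict_vec G q"
    by (rule imageE)
  moreover have "y e = Some (q e)" if "e \<in> G" for e
    using fin[OF that] arg_cong[OF \<open>p = restrict_vec G q\<close>, of "\<lambda>x. x $ e"] that
    by (auto simp: p_def restrict_vec_def)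
  ultimately show ?thesis
    using that by blast
qed

lemma Y_V_transfer:
  fixes V :: "('e::finite \<Rightarrow> real) set"
  assumes lin: "lin_subspace V" and T': "T' \<in> covectors V" "rel_acyclic V T' G"
    and y: "y \<in> Y_V V T" and fin: "\<And>e. y e = None \<longleftrightarrow> e \<notin> G"
    and conf: "\<And>e r. y e = Some r \<Longrightarrow> r \<noteq> 0 \<Longrightarrow> sgn_of r = T' e"
  shows "y \<in> Y_V V T'"
proof -
  have "Y_V V T \<subseteq> P1E_topology closure_of ((\<lambda>v e. Some (v e)) ` V)"
    unfolding Y_V_def by (intro closure_of_mono image_mono) blast
  with y have "y \<in> P1E_topology closure_of ((\<lambda>v e. Some (v e)) ` V)"
    by blast
  moreover have "y e \<noteq> None" if "e \<in> G" for e
    using fin that by simp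
  ultimately obtain q where q: "q \<in> V" "\<And>e. e \<in> G \<Longrightarrow> y e = Some (q e)"
    using closure_of_embedded_subspace[OF lin] by blast
  have "y = (\<lambda>e. if e \<in> G then Some (q e) else None)"
  proof
    fix e
    show "y e = (if e \<in> G then Some (q e) else None)"
      using q(2)[of e] fin[of e] by (cases "e \<in> G") simp_all
  qed
  also have "\<dots> \<in> Y_V V T'"
    by (rule conformal_point_in_Y_V[OF lin T' q(1) conf[OF q(2)]])
  finally show ?thesis .
qed

definition stratum_sign :: "('e \<Rightarrow> sign) \<Rightarrow> 'e set \<Rightarrow> 'e set \<Rightarrow> 'e \<Rightarrow> sign option" where
  "stratum_sign T F G e = (if e \<notin> G then None else if e \<in> F then Some Zero else Some (T e))"

lemma Y_open_stratum_sign_pattern: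
  assumes "F \<subseteq> G" "\<And>e. e \<notin> F \<Longrightarrow> T e \<noteq> Zero"
  shows "Y_open_stratum V T F G = Y_V V T \<inter> {y. map_option sgn_of \<circ> y = stratum_sign T F G}"
proof -
  have pointwise: "(e \<in> F \<longrightarrow> y e = Some 0) \<and>
      (e \<in> (G - F) \<inter> pos_part T \<longrightarrow> (\<exists>r>0. y e = Some r)) \<and>
      (e \<in> (G - F) \<inter> neg_part T \<longrightarrow> (\<exists>r<0. y e = Some r)) \<and>
      (e \<in> - G \<longrightarrow> y e = None)
    \<longleftrightarrow> map_option sgn_of (y e) = stratum_sign T F G e" for y e
    using assms(1) assms(2)[of e]
    by (cases "y e"; cases "T e") (auto simp: stratum_sign_def pos_part_def neg_part_def sgn_of_def)
  show ?thesis
    unfolding Y_open_stratum_def comp_def fun_eq_iff pointwise[symmetric] by blast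
qed

lemma stratum_sign_eq_iff:
  assumes "F \<subseteq> G" "\<And>e. e \<notin> F \<Longrightarrow> T e \<noteq> Zero"
    and "F' \<subseteq> G'" "\<And>e. e \<notin> F' \<Longrightarrow> T' e \<noteq> Zero"
  shows "stratum_sign T F G = stratum_sign T' F' G' \<longleftrightarrow> triple_equiv (F, G, T) (F', G', T')"
proof
  assume eq: "stratum_sign T F G = stratum_sign T' F' G'"
  have "e \<in> G \<longleftrightarrow> e \<in> G'" for e
    using fun_cong[OF eq, of e] by (auto simp: stratum_sign_def split: if_splits)
  then have "G = G'"
    by blast
  have "e \<in> F \<longleftrightarrow> e \<in> F'" for e
    using fun_cong[OF eq, of e] assms(1,3) assms(2,4)[of e]
    by (auto simp: stratum_sign_def split: if_splits)
  then have "F = F'"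
    by blast
  have "T e = T' e" if "e \<in> G - F" for e
    using fun_cong[OF eq, of e] that \<open>G = G'\<close> \<open>F = F'\<close> by (simp add: stratum_sign_def)
  with \<open>G = G'\<close> \<open>F = F'\<close> show "triple_equiv (F, G, T) (F', G', T')"
    unfolding triple_equiv_def by simp
next
  assume "triple_equiv (F, G, T) (F', G', T')"
  then show "stratum_sign T F G = stratum_sign T' F' G'"
    unfolding triple_equiv_def by (auto simp: stratum_sign_def fun_eq_iff)
qed

lemma admissible_tripleD:
  assumes "admissible_triple V (F, G, T)"
  shows "T \<in> covectors V" "rel_acyclic V T G" "F \<subseteq> G" "\<And>e. e \<notin> F \<Longrightarrow> T e \<noteq> Zero"
proof -
  show "T \<in> covectors V" "rel_acyclic V T G" "F \<subseteq> G"
    using assms unfolding admissible_triple_def is_tope_def by simp_all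
  have "rel_acyclic V T F"
    using assms unfolding admissible_triple_def by simp
  then show "T e \<noteq> Zero" if "e \<notin> F" for e
    using that by (rule rel_acyclic_nonzero)
qed

lemma Y_open_stratum_subset:
  fixes V :: "('e::finite \<Rightarrow> real) set"
  assumes lin: "lin_subspace V"
    and adm: "admissible_triple V (F, G, T)" and adm': "admissible_triple V (F, G, T')"
    and agree: "\<forall>e\<in>G - F. T e = T' e"
  shows "Y_open_stratum V T F G \<subseteq> Y_open_stratum V T' F G"
proof
  note props = admissible_tripleD[OF adm] and props' = admissible_tripleD[OF adm']
  have same_sign: "stratum_sign T F G = stratum_sign T' F G"
    using stratum_sign_eq_iff[OF props(3,4) props'(3,4)] agree unfolding triple_equiv_def by simp
  fix y assume "y \<in> Y_open_stratum V T F G"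
  then have y: "y \<in> Y_V V T" and "map_option sgn_of \<circ> y = stratum_sign T' F G"
    by (simp_all add: Y_open_stratum_sign_pattern[OF props(3,4)] same_sign)
  then have pattern: "map_option sgn_of (y e) = stratum_sign T' F G e" for e
    by (simp add: fun_eq_iff)
  have "y \<in> Y_V V T'"
  proof (rule Y_V_transfer[OF lin props'(1,2) y])
    show "y e = None \<longleftrightarrow> e \<notin> G" for e
      using pattern[of e] by (auto simp: stratum_sign_def split: if_splits)
    show "sgn_of r = T' e" if "y e = Some r" "r \<noteq> 0" for e r
      using pattern[of e] that by (auto simp: stratum_sign_def split: if_splits)
  qed
  with pattern show "y \<in> Y_open_stratum V T' F G"
    by (simp add: Y_open_stratum_sign_pattern[OF props'(3,4)] fun_eq_iff)
qed

theorem lemma5p3: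
  fixes V :: "('e::finite \<Rightarrow> real) set"
    and F G F' G' :: "'e set" and T T' :: "'e \<Rightarrow> sign"
  assumes "lin_subspace V"
    and "admissible_triple V (F, G, T)"
    and "admissible_triple V (F', G', T')"
  shows "(Y_open_stratum V T F G \<inter> Y_open_stratum V T' F' G' \<noteq> {}
            \<longrightarrow> triple_equiv (F, G, T) (F', G', T'))
       \<and> (triple_equiv (F, G, T) (F', G', T')
            \<longrightarrow> Y_open_stratum V T F G = Y_open_stratum V T' F' G')"
proof (intro conjI impI)
  note adm = admissible_tripleD[OF assms(2)] and adm' = admissible_tripleD[OF assms(3)]
  assume "Y_open_stratum V T F G \<inter> Y_open_stratum V T' F' G' \<noteq> {}"
  then obtain y where "y \<in> Y_open_stratum V T F G" "y \<in> Y_open_stratum V T' F' G'"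
    by blast
  then have "stratum_sign T F G = stratum_sign T' F' G'"
    by (simp add: Y_open_stratum_sign_pattern[OF adm(3,4)] Y_open_stratum_sign_pattern[OF adm'(3,4)])
  then show "triple_equiv (F, G, T) (F', G', T')"
    using stratum_sign_eq_iff[OF adm(3,4) adm'(3,4)] by simp
next
  assume "triple_equiv (F, G, T) (F', G', T')"
  then have "F' = F" "G' = G" "\<forall>e\<in>G - F. T e = T' e"
    unfolding triple_equiv_def by auto
  then show "Y_open_stratum V T F G = Y_open_stratum V T' F' G'"
    using Y_open_stratum_subset[OF assms(1)] assms(2,3) by (metis subset_antisym)
qed

end
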